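(* Let $n\ge 1$ and $k\ge 2$ be integers and let $f:\{0,1,\ldots,k-1\}^n\to\mathbb{R}$ be integer submodular, i.e. $f(\mathbf{x})+f(\mathbf{y})\ge f(\mathbf{x}\vee\mathbf{y})+f(\mathbf{x}\wedge\mathbf{y})$ for all $\mathbf{x},\mathbf{y}\in\{0,\ldots,k-1\}^n$, where $\vee,\wedge$ are the componentwise maximum and minimum. Let $F$ be the generalized multilinear extension of $f$ (defined in the context). Then: (1) If $f$ is monotone (i.e. $\mathbf{x}\le\mathbf{y}$ componentwise implies $f(\mathbf{x})\le f(\mathbf{y})$), then $\frac{\partial F}{\partial \rho_{ij}}\ge 0$ for all $i\in\{1,\ldots,n\}$ and $j\in\{1,\ldots,k-1\}$. (2) $F$ is DR-submodular, i.e. $\frac{\partial^2 F}{\partial \rho_{ij}\,\partial \rho_{i'l}}\le 0$ for all $i,i'\in\{1,\ldots,n\}$ and $j,l\in\{1,\ldots,k-1\}$ (this holds even if $f$ itself is not DR-submodular).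
   Context: For $\bm{\rho}_i=(\rho_{i1},\ldots,\rho_{i,k-1})$ define the simplex $\Delta^{k-1}=\{\bm{\rho}_i\in\mathbb{R}^{k-1}:\rho_{i1}+\cdots+\rho_{i,k-1}\le 1,\ \rho_{ij}\ge 0\}$, and let $\bm{\rho}=[\bm{\rho}_1;\ldots;\bm{\rho}_n]\in\Delta^{k-1}_n:=(\Delta^{k-1})^n$. Each $\bm{\rho}_i$ parametrizes a categorical distribution on $\{0,1,\ldots,k-1\}$ giving value $j\ge1$ probability $\rho_{ij}$ and value $0$ probability $1-\sum_{j=1}^{k-1}\rho_{ij}$. The generalized multilinear extension is $F(\bm{\rho})=\mathbb{E}[f(R(\bm{\rho}))]$, where $R(\bm{\rho})\in\{0,\ldots,k-1\}^n$ has independent coordinates, the $i$-th distributed according to $\bm{\rho}_i$. Explicitly $F(\bm{\rho})=\sum_{\mathbf{x}\in\{0,\ldots,k-1\}^n} f(\mathbf{x})\prod_{i=1}^n p_i(x_i)$ with $p_i(j)=\rho_{ij}$ for $j\ge1$ and $p_i(0)=1-\sum_{j}\rho_{ij}$; this is a polynomial in the variables $\rho_{ij}$, and its partial derivatives are those of this polynomial. *)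

theory Defs
  imports "HOL-Analysis.Analysis"
begin

definition grid :: "nat \<Rightarrow> nat \<Rightarrow> (nat \<Rightarrow> nat) set" where
  "grid n k = PiE {1..n} (\<lambda>_. {..<k})"

definition vjoin :: "(nat \<Rightarrow> nat) \<Rightarrow> (nat \<Rightarrow> nat) \<Rightarrow> (nat \<Rightarrow> nat)" where
  "vjoin x y = (\<lambda>i. max (x i) (y i))"

definition vmeet :: "(nat \<Rightarrow> nat) \<Rightarrow> (nat \<Rightarrow> nat) \<Rightarrow> (nat \<Rightarrow> nat)" where
  "vmeet x y = (\<lambda>i. min (x i) (y i))"

definition integer_submodular :: "nat \<Rightarrow> nat \<Rightarrow> ((nat \<Rightarrow> nat) \<Rightarrow> real) \<Rightarrow> bool" where
  "integer_submodular n k f \<longleftrightarrow>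
     (\<forall>x\<in>grid n k. \<forall>y\<in>grid n k. f x + f y \<ge> f (vjoin x y) + f (vmeet x y))"

definition monotone_grid :: "nat \<Rightarrow> nat \<Rightarrow> ((nat \<Rightarrow> nat) \<Rightarrow> real) \<Rightarrow> bool" where
  "monotone_grid n k f \<longleftrightarrow>
     (\<forall>x\<in>grid n k. \<forall>y\<in>grid n k. (\<forall>i\<in>{1..n}. x i \<le> y i) \<longrightarrow> f x \<le> f y)"

definition simplex_prod :: "nat \<Rightarrow> nat \<Rightarrow> (nat \<Rightarrow> nat \<Rightarrow> real) set" where
  "simplex_prod n k = {\<rho>. \<forall>i\<in>{1..n}. (\<forall>j\<in>{1..k-1}. \<rho> i j \<ge> 0) \<and> (\<Sum>j\<in>{1..k-1}. \<rho> i j) \<le> 1}"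

definition catprob :: "nat \<Rightarrow> (nat \<Rightarrow> real) \<Rightarrow> nat \<Rightarrow> real" where
  "catprob k r j = (if j = 0 then 1 - (\<Sum>j'\<in>{1..k-1}. r j') else r j)"

definition gen_mle :: "nat \<Rightarrow> nat \<Rightarrow> ((nat \<Rightarrow> nat) \<Rightarrow> real) \<Rightarrow> (nat \<Rightarrow> nat \<Rightarrow> real) \<Rightarrow> real" where
  "gen_mle n k f \<rho> = (\<Sum>x\<in>grid n k. f x * (\<Prod>i\<in>{1..n}. catprob k (\<rho> i) (x i)))"

definition pderiv_ij :: "((nat \<Rightarrow> nat \<Rightarrow> real) \<Rightarrow> real) \<Rightarrow> nat \<Rightarrow> nat \<Rightarrow> (nat \<Rightarrow> nat \<Rightarrow> real) \<Rightarrow> real" where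
  "pderiv_ij G i j \<rho> = deriv (\<lambda>t. G (\<rho>(i := (\<rho> i)(j := t)))) (\<rho> i j)"

end

theory Submission
  imports Defs
begin

text \<open>Each factor of the product defining F is affine in its own block \<open>\<rho> i\<close>, so F is
  affine in every single variable \<open>\<rho> i j\<close>, with slope the expectation, over the coordinates
  other than i, of the difference \<open>f (x(i := j)) - f (x(i := 0))\<close>; this is nonnegative for
  monotone f. Differentiating again in \<open>\<rho> i' l\<close> gives 0 if \<open>i' = i\<close>, and otherwise the
  expectation of the mixed second difference
  \<open>f (x(i := j, i' := l)) - f (x(i := j, i' := 0)) - f (x(i := 0, i' := l)) + f (x(i := 0, i' := 0))\<close>,
  which is nonpositive by submodularity, the first and last points being the join and meet of
  the middle two.\<close>

lemma fun_upd_in_grid: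
  "x \<in> grid n k \<Longrightarrow> i \<in> {1..n} \<Longrightarrow> v < k \<Longrightarrow> x(i := v) \<in> grid n k"
  unfolding grid_def by (auto simp: PiE_iff extensional_def)

lemma finite_grid: "finite (grid n k)"
  unfolding grid_def by (simp add: finite_PiE)

definition coord_diff ::
    "nat \<Rightarrow> nat \<Rightarrow> ((nat \<Rightarrow> nat) \<Rightarrow> real) \<Rightarrow> (nat \<Rightarrow> nat) \<Rightarrow> real" where
  "coord_diff i j h x = h (x(i := j)) - h (x(i := 0))"

lemma monotone_grid_coord_diff_nonneg:
  assumes "monotone_grid n k f" "x \<in> grid n k" "i \<in> {1..n}" "j < k"
  shows "coord_diff i j f x \<ge> 0"
proof -
  have "x(i := 0) \<in> grid n k" "x(i := j) \<in> grid n k"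
    using assms by (auto intro: fun_upd_in_grid)
  moreover have "\<forall>m\<in>{1..n}. (x(i := 0)) m \<le> (x(i := j)) m"
    by simp
  ultimately have "f (x(i := 0)) \<le> f (x(i := j))"
    using assms(1) unfolding monotone_grid_def by blast
  then show ?thesis
    by (simp add: coord_diff_def)
qed

lemma integer_submodular_coord_diff_coord_diff_nonpos:
  assumes "integer_submodular n k f" "x \<in> grid n k"
    and "i \<in> {1..n}" "i' \<in> {1..n}" "i \<noteq> i'" "j < k" "l < k"
  shows "coord_diff i j (coord_diff i' l f) x \<le> 0"
proof -
  let ?y = "x(i := j, i' := 0)" and ?z = "x(i := 0, i' := l)"
  have "?y \<in> grid n k" "?z \<in> grid n k"
    using assms by (auto intro!: fun_upd_in_grid)
  then have "f (vjoin ?y ?z) + f (vmeet ?y ?z) \<le> f ?y + f ?z"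
    using assms(1) unfolding integer_submodular_def by blast
  moreover have "vjoin ?y ?z = x(i := j, i' := l)" "vmeet ?y ?z = x(i := 0, i' := 0)"
    using \<open>i \<noteq> i'\<close> by (auto simp: vjoin_def vmeet_def)
  ultimately have "f (x(i := j, i' := l)) + f (x(i := 0, i' := 0)) \<le> f ?y + f ?z"
    by simp
  then show ?thesis
    using \<open>i \<noteq> i'\<close> by (simp add: coord_diff_def fun_upd_twist)
qed

lemma sum_grid_coord_eq_shift:
  fixes g :: "(nat \<Rightarrow> nat) \<Rightarrow> real"
  assumes "i \<in> {1..n}" "j < k"
  shows "(\<Sum>x\<in>grid n k. of_bool (x i = j) * g x)
       = (\<Sum>x\<in>grid n k. of_bool (x i = 0) * g (x(i := j)))"
proof -
  let ?shift = "\<lambda>x. x(i := j)"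
  have image: "grid n k \<inter> {x. x i = j} = ?shift ` (grid n k \<inter> {x. x i = 0})"
  proof (intro equalityI subsetI)
    fix x assume "x \<in> grid n k \<inter> {x. x i = j}"
    then have "x(i := 0) \<in> grid n k \<inter> {x. x i = 0}" "x = ?shift (x(i := 0))"
      using assms by (auto intro: fun_upd_in_grid)
    then show "x \<in> ?shift ` (grid n k \<inter> {x. x i = 0})" by blast
  qed (use assms in \<open>auto intro: fun_upd_in_grid\<close>)
  have inj: "inj_on ?shift (grid n k \<inter> {x. x i = 0})"
  proof (rule inj_onI)
    fix x y assume "x \<in> grid n k \<inter> {x. x i = 0}" "y \<in> grid n k \<inter> {x. x i = 0}"
      and "x(i := j) = y(i := j)"
    then have "(x(i := j))(i := 0) = (y(i := j))(i := 0)" "x i = 0" "y i = 0"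
      by auto
    then show "x = y"
      by (simp add: fun_upd_idem)
  qed
  have "(\<Sum>x\<in>grid n k \<inter> {x. x i = j}. g x)
      = (\<Sum>x\<in>grid n k \<inter> {x. x i = 0}. g (x(i := j)))"
    unfolding image sum.reindex[OF inj] by simp
  then show ?thesis
    by (simp add: finite_grid)
qed

definition catprob_slope :: "nat \<Rightarrow> nat \<Rightarrow> real" where
  "catprob_slope j v = of_bool (v = j) - of_bool (v = 0)"

lemma sum_grid_catprob_slope:
  assumes "i \<in> {1..n}" "j < k" and W: "\<And>x v. W (x(i := v)) = W x"
  shows "(\<Sum>x\<in>grid n k. h x * catprob_slope j (x i) * W x)
       = (\<Sum>x\<in>grid n k. coord_diff i j h x * of_bool (x i = 0) * W x)"
proof -
  have "(\<Sum>x\<in>grid n k. h x * catprob_slope j (x i) * W x)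
      = (\<Sum>x\<in>grid n k. of_bool (x i = j) * (h x * W x))
        - (\<Sum>x\<in>grid n k. of_bool (x i = 0) * (h x * W x))"
    by (simp add: catprob_slope_def algebra_simps flip: sum_subtractf)
  also have "\<dots> = (\<Sum>x\<in>grid n k. of_bool (x i = 0) * (h (x(i := j)) * W x))
        - (\<Sum>x\<in>grid n k. of_bool (x i = 0) * (h x * W x))"
    by (simp add: sum_grid_coord_eq_shift[OF assms(1,2)] W)
  also have "\<dots> = (\<Sum>x\<in>grid n k. coord_diff i j h x * of_bool (x i = 0) * W x)"
    unfolding sum_subtractf[symmetric]
    by (intro sum.cong) (auto simp: coord_diff_def left_diff_distrib fun_upd_idem)
  finally show ?thesis .
qed

lemma catprob_fun_upd:
  assumes "j \<in> {1..k-1}"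
  shows "catprob k (r(j := t)) v = catprob k r v + (t - r j) * catprob_slope j v"
proof -
  have "(\<Sum>j'\<in>{1..k-1}. (r(j := t)) j') = t + (\<Sum>j'\<in>{1..k-1} - {j}. r j')"
    using sum.remove[OF _ assms, of "r(j := t)"] by simp
  also have "\<dots> = (\<Sum>j'\<in>{1..k-1}. r j') + (t - r j)"
    using assms by (simp add: sum_diff1)
  finally have "(\<Sum>j'\<in>{1..k-1}. (r(j := t)) j') = (\<Sum>j'\<in>{1..k-1}. r j') + (t - r j)" .
  then show ?thesis
    using assms by (auto simp: catprob_def catprob_slope_def)
qed

lemma catprob_nonneg:
  assumes "\<rho> \<in> simplex_prod n k" "m \<in> {1..n}" "v < k"
  shows "catprob k (\<rho> m) v \<ge> 0"
  using assms unfolding simplex_prod_def catprob_def by auto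

definition catprob_prod ::
    "nat \<Rightarrow> nat set \<Rightarrow> (nat \<Rightarrow> nat \<Rightarrow> real) \<Rightarrow> (nat \<Rightarrow> nat) \<Rightarrow> real" where
  "catprob_prod k S \<rho> x = (\<Prod>m\<in>S. catprob k (\<rho> m) (x m))"

lemma catprob_prod_nonneg:
  "\<rho> \<in> simplex_prod n k \<Longrightarrow> x \<in> grid n k \<Longrightarrow> S \<subseteq> {1..n} \<Longrightarrow> catprob_prod k S \<rho> x \<ge> 0"
  unfolding catprob_prod_def grid_def
  by (intro prod_nonneg catprob_nonneg) (auto simp: PiE_iff)

lemma catprob_prod_point_upd:
  "i \<notin> S \<Longrightarrow> catprob_prod k S \<rho> (x(i := v)) = catprob_prod k S \<rho> x"
  unfolding catprob_prod_def by (intro prod.cong) auto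

lemma catprob_prod_param_upd_nonmem:
  "i \<notin> S \<Longrightarrow> catprob_prod k S (\<rho>(i := r)) x = catprob_prod k S \<rho> x"
  unfolding catprob_prod_def by (intro prod.cong) auto

lemma catprob_prod_param_upd_mem:
  assumes "finite S" "i \<in> S" "j \<in> {1..k-1}"
  shows "catprob_prod k S (\<rho>(i := (\<rho> i)(j := t))) x
       = catprob_prod k S \<rho> x
         + (t - \<rho> i j) * catprob_slope j (x i) * catprob_prod k (S - {i}) \<rho> x"
proof -
  have "catprob_prod k S \<rho>' x = catprob k (\<rho>' i) (x i) * catprob_prod k (S - {i}) \<rho>' x" for \<rho>'
    unfolding catprob_prod_def using assms(1,2) by (rule prod.remove)
  then show ?thesis
    using assms(3) by (simp add: catprob_prod_param_upd_nonmem catprob_fun_upd algebra_simps)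
qed

lemma pderiv_ij_affine:
  assumes "\<And>\<rho> t. G (\<rho>(i := (\<rho> i)(j := t))) = G \<rho> + (t - \<rho> i j) * D \<rho>"
  shows "pderiv_ij G i j = D"
proof
  fix \<rho>
  have "((\<lambda>t. G \<rho> + (t - \<rho> i j) * D \<rho>) has_real_derivative D \<rho>) (at (\<rho> i j))"
    by (auto intro!: derivative_eq_intros)
  then show "pderiv_ij G i j \<rho> = D \<rho>"
    unfolding pderiv_ij_def assms by (rule DERIV_imp_deriv)
qed

lemma pderiv_ij_sum_catprob_prod_mem:
  assumes "finite S" "i \<in> S" "j \<in> {1..k-1}"
  shows "pderiv_ij (\<lambda>\<rho>. \<Sum>x\<in>X. w x * catprob_prod k S \<rho> x) i j
       = (\<lambda>\<rho>. \<Sum>x\<in>X. (w x * catprob_slope j (x i)) * catprob_prod k (S - {i}) \<rho> x)"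
proof (rule pderiv_ij_affine)
  fix \<rho> t
  have "w x * catprob_prod k S (\<rho>(i := (\<rho> i)(j := t))) x
      = w x * catprob_prod k S \<rho> x
        + (t - \<rho> i j) * ((w x * catprob_slope j (x i)) * catprob_prod k (S - {i}) \<rho> x)" for x
    by (simp add: catprob_prod_param_upd_mem[OF assms] algebra_simps)
  then show "(\<Sum>x\<in>X. w x * catprob_prod k S (\<rho>(i := (\<rho> i)(j := t))) x)
      = (\<Sum>x\<in>X. w x * catprob_prod k S \<rho> x)
        + (t - \<rho> i j) * (\<Sum>x\<in>X. (w x * catprob_slope j (x i)) * catprob_prod k (S - {i}) \<rho> x)"
    by (simp only: sum.distrib sum_distrib_left)
qed

lemma pderiv_ij_sum_catprob_prod_nonmem:
  "i \<notin> S \<Longrightarrow> pderiv_ij (\<lambda>\<rho>. \<Sum>x\<in>X. w x * catprob_prod k S \<rho> x) i j = (\<lambda>_. 0)"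
  by (rule pderiv_ij_affine) (simp add: catprob_prod_param_upd_nonmem)

lemma gen_mle_eq_sum_catprob_prod:
  "gen_mle n k f = (\<lambda>\<rho>. \<Sum>x\<in>grid n k. f x * catprob_prod k {1..n} \<rho> x)"
  unfolding gen_mle_def catprob_prod_def ..

lemma pderiv_ij_gen_mle:
  assumes "i \<in> {1..n}" "j \<in> {1..k-1}"
  shows "pderiv_ij (gen_mle n k f) i j
       = (\<lambda>\<rho>. \<Sum>x\<in>grid n k.
            (f x * catprob_slope j (x i)) * catprob_prod k ({1..n} - {i}) \<rho> x)"
  unfolding gen_mle_eq_sum_catprob_prod using assms
  by (simp add: pderiv_ij_sum_catprob_prod_mem)

lemma pderiv_ij_gen_mle_expectation:
  assumes "i \<in> {1..n}" "j \<in> {1..k-1}"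
  shows "pderiv_ij (gen_mle n k f) i j \<rho>
       = (\<Sum>x\<in>grid n k.
            coord_diff i j f x * of_bool (x i = 0) * catprob_prod k ({1..n} - {i}) \<rho> x)"
  unfolding pderiv_ij_gen_mle[OF assms] using assms
  by (intro sum_grid_catprob_slope) (auto simp: catprob_prod_point_upd)

lemma pderiv_ij_pderiv_ij_gen_mle_same:
  assumes "i \<in> {1..n}" "j \<in> {1..k-1}"
  shows "pderiv_ij (pderiv_ij (gen_mle n k f) i j) i l = (\<lambda>_. 0)"
  using assms by (simp add: pderiv_ij_gen_mle pderiv_ij_sum_catprob_prod_nonmem)

lemma pderiv_ij_pderiv_ij_gen_mle_expectation:
  assumes "i \<in> {1..n}" "j \<in> {1..k-1}" "i' \<in> {1..n}" "l \<in> {1..k-1}" "i \<noteq> i'"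
  shows "pderiv_ij (pderiv_ij (gen_mle n k f) i j) i' l \<rho>
       = (\<Sum>x\<in>grid n k. coord_diff i j (coord_diff i' l f) x * of_bool (x i = 0)
            * (of_bool (x i' = 0) * catprob_prod k ({1..n} - {i} - {i'}) \<rho> x))"
proof -
  let ?Q = "catprob_prod k ({1..n} - {i} - {i'}) \<rho>"
  have "pderiv_ij (pderiv_ij (gen_mle n k f) i j) i' l \<rho>
      = (\<Sum>x\<in>grid n k. (f x * catprob_slope j (x i)) * catprob_slope l (x i') * ?Q x)"
    using assms by (simp add: pderiv_ij_gen_mle pderiv_ij_sum_catprob_prod_mem)
  also have "\<dots> = (\<Sum>x\<in>grid n k.
      coord_diff i' l (\<lambda>y. f y * catprob_slope j (y i)) x * of_bool (x i' = 0) * ?Q x)"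
    using assms by (intro sum_grid_catprob_slope) (auto simp: catprob_prod_point_upd)
  also have "\<dots> = (\<Sum>x\<in>grid n k.
      coord_diff i' l f x * catprob_slope j (x i) * (of_bool (x i' = 0) * ?Q x))"
    using assms by (intro sum.cong) (auto simp: coord_diff_def algebra_simps)
  also have "\<dots> = (\<Sum>x\<in>grid n k.
      coord_diff i j (coord_diff i' l f) x * of_bool (x i = 0) * (of_bool (x i' = 0) * ?Q x))"
    using assms by (intro sum_grid_catprob_slope) (auto simp: catprob_prod_point_upd)
  finally show ?thesis .
qed

lemma pderiv_ij_gen_mle_nonneg:
  assumes "monotone_grid n k f" "\<rho> \<in> simplex_prod n k" "i \<in> {1..n}" "j \<in> {1..k-1}"
  shows "pderiv_ij (gen_mle n k f) i j \<rho> \<ge> 0"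
  unfolding pderiv_ij_gen_mle_expectation[OF assms(3,4)]
proof (rule sum_nonneg)
  fix x assume x: "x \<in> grid n k"
  have "coord_diff i j f x \<ge> 0"
    using assms x by (intro monotone_grid_coord_diff_nonneg) auto
  moreover have "catprob_prod k ({1..n} - {i}) \<rho> x \<ge> 0"
    using assms(2) x by (rule catprob_prod_nonneg) auto
  ultimately show
    "coord_diff i j f x * of_bool (x i = 0) * catprob_prod k ({1..n} - {i}) \<rho> x \<ge> 0"
    by simp
qed

lemma pderiv_ij_pderiv_ij_gen_mle_nonpos:
  assumes "integer_submodular n k f" "\<rho> \<in> simplex_prod n k"
    and "i \<in> {1..n}" "j \<in> {1..k-1}" "i' \<in> {1..n}" "l \<in> {1..k-1}"
  shows "pderiv_ij (pderiv_ij (gen_mle n k f) i j) i' l \<rho> \<le> 0"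
proof (cases "i = i'")
  case True
  then show ?thesis
    using assms by (simp add: pderiv_ij_pderiv_ij_gen_mle_same)
next
  case False
  show ?thesis
    unfolding pderiv_ij_pderiv_ij_gen_mle_expectation[OF assms(3-6) False]
  proof (rule sum_nonpos)
    fix x assume x: "x \<in> grid n k"
    have "coord_diff i j (coord_diff i' l f) x \<le> 0"
      using assms x False by (intro integer_submodular_coord_diff_coord_diff_nonpos) auto
    moreover have "catprob_prod k ({1..n} - {i} - {i'}) \<rho> x \<ge> 0"
      using assms(2) x by (rule catprob_prod_nonneg) auto
    ultimately show "coord_diff i j (coord_diff i' l f) x * of_bool (x i = 0)
        * (of_bool (x i' = 0) * catprob_prod k ({1..n} - {i} - {i'}) \<rho> x) \<le> 0"
      by (simp add: mult_nonpos_nonneg)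
  qed
qed

theorem proposition1:
  fixes n k :: nat and f :: "(nat \<Rightarrow> nat) \<Rightarrow> real" and \<rho> :: "nat \<Rightarrow> nat \<Rightarrow> real"
  assumes "n \<ge> 1" and "k \<ge> 2"
    and "integer_submodular n k f"
    and "\<rho> \<in> simplex_prod n k"
  shows "(monotone_grid n k f \<longrightarrow>
           (\<forall>i\<in>{1..n}. \<forall>j\<in>{1..k-1}. pderiv_ij (gen_mle n k f) i j \<rho> \<ge> 0))
       \<and> (\<forall>i\<in>{1..n}. \<forall>i'\<in>{1..n}. \<forall>j\<in>{1..k-1}. \<forall>l\<in>{1..k-1}.
            pderiv_ij (pderiv_ij (gen_mle n k f) i j) i' l \<rho> \<le> 0)"
proof (intro conjI impI ballI)
  fix i j assume "monotone_grid n k f" "i \<in> {1..n}" "j \<in> {1..k-1}"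
  with assms(4) show "pderiv_ij (gen_mle n k f) i j \<rho> \<ge> 0"
    by (intro pderiv_ij_gen_mle_nonneg)
next
  fix i i' j l assume "i \<in> {1..n}" "i' \<in> {1..n}" "j \<in> {1..k-1}" "l \<in> {1..k-1}"
  then show "pderiv_ij (pderiv_ij (gen_mle n k f) i j) i' l \<rho> \<le> 0"
    using assms(3,4) by (intro pderiv_ij_pderiv_ij_gen_mle_nonpos)
qed

end
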